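(* Let $\mathcal H$ be a real Hilbert space, let $f:\mathcal H\to\mathbb R$ be convex and twice continuously differentiable with $\operatorname{argmin}_{\mathcal H} f\neq\emptyset$, let $t_0>0$, $\alpha>3$ and $\beta\ge 0$. Let $u:[t_0,+\infty[\to\mathcal H$ be a classical solution of $$\text{(TOGES-VH)}\quad \dddot u(t)+\frac{\alpha+7}{t}\ddot u(t)+\frac{5(\alpha+1)}{t^2}\dot u(t)+\beta\,\nabla^2 f\Big(u(t)+\tfrac14 t\dot u(t)\Big)\Big(\tfrac54\dot u(t)+\tfrac14 t\ddot u(t)\Big)+\nabla f\Big(u(t)+\tfrac14 t\dot u(t)\Big)=0 .$$ Fix $z\in\operatorname{argmin}_{\mathcal H}f$ and define, for $t\ge t_0$, $$E(t)=4(t^3-2\beta t^2)\Big(f\big(u(t)+\tfrac14 t\dot u(t)\big)-\inf_{\mathcal H}f\Big)+\frac12\Big\|t^2\Big(\ddot u(t)+\beta\nabla f\big(u(t)+\tfrac14 t\dot u(t)\big)\Big)+(\alpha+5)t\dot u(t)+4\alpha(u(t)-z)\Big\|^2 .$$ Let $t_1:=\max\Big\{t_0,\ \frac{2\beta(\alpha-2)}{\alpha-3}\Big\}$ and $F(u(t_1)):=f(u(t_1))-\inf_{\mathcal H}f$. Then: (i) for all $t\ge t_1$, $$f\big(u(t)+\tfrac14 t\dot u(t)\big)-\inf_{\mathcal H} f\le \frac{(\alpha-2)E(t_1)}{4t^3},$$ $$f(u(t))-\inf_{\mathcal H}f\le \big(t_1^4F(u(t_1))-(\alpha-2)E(t_1)\,t_1\big)\frac{1}{t^4}+\frac{(\alpha-2)E(t_1)}{t^3},$$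 and the function $t\mapsto f(u(t))+\frac{(\alpha-2)E(t_1)}{3t^3}$ is nonincreasing on $[t_1,+\infty[$; (ii) if moreover $\beta>0$, then $$\int_{t_1}^{+\infty} t^4\Big\|\nabla f\big(u(t)+\tfrac14 t\dot u(t)\big)\Big\|^2\,dt\le\frac{(\alpha-2)E(t_1)}{\beta}.$$
   Context: $\nabla^2 f(x)\in\mathcal L(\mathcal H,\mathcal H)$ denotes the Hessian of $f$ at $x$, and $\nabla^2 f(x)(\xi)$ its action on $\xi\in\mathcal H$. $\dot u,\ddot u,\dddot u$ are time derivatives of $u$. *)

theory Defs
  imports "HOL-Analysis.Analysis"
begin

end

theory Submission
  imports Defs
begin

text \<open>Along the trajectory, with \<open>v = u + (t/4) u'\<close> and \<open>w = t\<^sup>2 (u'' + \<beta> \<nabla>f(v)) + (\<alpha>+5) t u' + 4\<alpha> (u - z)\<close>,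
the equation says exactly that \<open>w' = -(t\<^sup>2 - 2\<beta>t) \<nabla>f(v)\<close>. Differentiating the energy, the terms in
\<open>\<langle>\<nabla>f(v), v'\<rangle>\<close> cancel, and convexity (\<open>f(v) - f(z) \<le> \<langle>\<nabla>f(v), v - z\<rangle>\<close>) together with \<open>t \<ge> t\<^sub>1\<close>
gives \<open>E' \<le> -\<beta>/(\<alpha>-2) t\<^sup>4 |\<nabla>f(v)|\<^sup>2\<close>. Hence \<open>E\<close> decreases, which bounds \<open>4t\<^sup>3 (f(v) - min f)\<close> by
\<open>(\<alpha>-2) E(t\<^sub>1)\<close> and, after integration, the weighted gradient integral. Convexity between \<open>u\<close> and \<open>v\<close> gives
\<open>t\<^sup>4 \<langle>\<nabla>f(u), u'\<rangle> \<le> 4t\<^sup>3 (f(v) - f(u))\<close>, which turns the bound at \<open>v\<close> into the two statements about \<open>f(u)\<close>.\<close>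

lemma has_real_derivative_comp_gradient:
  assumes "(v has_vector_derivative v') (at t within S)"
    and "(f has_derivative (\<lambda>h. g \<bullet> h)) (at (v t))"
  shows "((\<lambda>t. f (v t)) has_real_derivative g \<bullet> v') (at t within S)"
  using vector_derivative_diff_chain_within[OF assms(1) has_derivative_at_withinI[OF assms(2)]]
  by (simp add: has_real_derivative_iff_has_vector_derivative o_def)

lemma has_vector_derivative_comp_blinfun:
  assumes "(v has_vector_derivative v') (at t within S)"
    and "(g has_derivative blinfun_apply H) (at (v t))"
  shows "((\<lambda>t. g (v t)) has_vector_derivative H v') (at t within S)"
  using vector_derivative_diff_chain_within[OF assms(1) has_derivative_at_withinI[OF assms(2)]]
  by (simp add: o_def)

lemma convex_on_imp_above_tangent_gradient:
  fixes f :: "'a::real_inner \<Rightarrow> real"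
  assumes convex: "convex_on UNIV f"
    and grad: "(f has_derivative (\<lambda>h. g \<bullet> h)) (at x)"
  shows "f x + g \<bullet> (y - x) \<le> f y"
proof -
  define \<phi> where "\<phi> = (\<lambda>s::real. f (x + s *\<^sub>R (y - x)))"
  have "convex_on UNIV \<phi>"
  proof (rule convex_onI)
    fix s a b :: real
    assume "0 < s" "s < 1"
    moreover have "x + ((1 - s) *\<^sub>R a + s *\<^sub>R b) *\<^sub>R (y - x)
        = (1 - s) *\<^sub>R (x + a *\<^sub>R (y - x)) + s *\<^sub>R (x + b *\<^sub>R (y - x))"
      by (simp add: algebra_simps)
    ultimately show "\<phi> ((1 - s) *\<^sub>R a + s *\<^sub>R b) \<le> (1 - s) * \<phi> a + s * \<phi> b"
      unfolding \<phi>_def using convex_onD[OF convex] by simp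
  qed simp
  moreover have "(\<phi> has_field_derivative g \<bullet> (y - x)) (at 0)"
    unfolding \<phi>_def
    by (rule has_real_derivative_comp_gradient) (auto intro!: derivative_eq_intros grad)
  ultimately have "\<phi> 1 - \<phi> 0 \<ge> g \<bullet> (y - x)"
    using convex_on_imp_above_tangent[of UNIV \<phi> 0 1] by simp
  then show ?thesis
    unfolding \<phi>_def by simp
qed

lemma has_real_derivative_norm_square:
  fixes w :: "real \<Rightarrow> 'a::real_inner"
  assumes "(w has_vector_derivative w') (at t within S)"
  shows "((\<lambda>t. (norm (w t))\<^sup>2) has_real_derivative 2 * (w t \<bullet> w')) (at t within S)"
  using bounded_bilinear.has_vector_derivative[OF bounded_bilinear_inner assms assms]
  by (simp add: has_real_derivative_iff_has_vector_derivative power2_norm_eq_inner inner_commute)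

lemma has_real_derivative_diff_le_integral:
  fixes \<phi> :: "real \<Rightarrow> real"
  assumes "a \<le> b" and "{a..b} \<subseteq> S"
    and deriv: "\<And>x. x \<in> {a..b} \<Longrightarrow> (\<phi> has_real_derivative \<phi>' x) (at x within S)"
    and le: "\<And>x. x \<in> {a..b} \<Longrightarrow> \<phi>' x \<le> k x"
    and int: "(k has_integral K) {a..b}"
  shows "\<phi> b - \<phi> a \<le> K"
proof -
  have "(\<phi> has_vector_derivative \<phi>' x) (at x within {a..b})" if "x \<in> {a..b}" for x
    using has_field_derivative_subset[OF deriv[OF that] \<open>{a..b} \<subseteq> S\<close>]
    by (simp add: has_real_derivative_iff_has_vector_derivative)
  from fundamental_theorem_of_calculus[OF \<open>a \<le> b\<close> this]
  show ?thesis
    using has_integral_le[OF _ int] le by auto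
qed

lemma nonneg_has_integral_atLeast_le:
  fixes h :: "real \<Rightarrow> real"
  assumes int: "\<And>b. h integrable_on {a..b}"
    and nonneg: "\<And>x. a \<le> x \<Longrightarrow> 0 \<le> h x"
    and bound: "\<And>b. a \<le> b \<Longrightarrow> integral {a..b} h \<le> B"
  shows "h integrable_on {a..} \<and> integral {a..} h \<le> B"
proof -
  define I where "I y = integral {a..y} h" for y
  have mono: "I y \<le> I y'" if "y \<le> y'" for y y'
    unfolding I_def using that nonneg by (intro integral_subset_le int) auto
  have bdd: "bdd_above (I ` {a..})"
    using bound unfolding I_def by (intro bdd_aboveI2) auto
  define l where "l = (SUP y\<in>{a..}. I y)"
  have "(I \<longlongrightarrow> l) at_top"
  proof (rule increasing_tendsto)
    show "\<forall>\<^sub>F y in at_top. I y \<le> l"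
      using eventually_ge_at_top[of a] unfolding l_def
      by eventually_elim (use bdd in \<open>auto intro: cSUP_upper\<close>)
  next
    fix x assume "x < l"
    then obtain y where "x < I y"
      unfolding l_def using less_cSUP_iff[OF _ bdd] by auto
    then show "\<forall>\<^sub>F y' in at_top. x < I y'"
      using mono by (auto intro: eventually_mono[OF eventually_ge_at_top[of y]] order.strict_trans2)
  qed
  then have "(h has_integral l) {a..}"
    unfolding I_def by (intro has_integral_to_inf int nonneg)
  moreover have "l \<le> B"
    unfolding l_def I_def using bound by (intro cSUP_least) auto
  ultimately show ?thesis
    by (simp add: has_integral_integrable_integral)
qed

lemma energy_rate_bound_real:
  fixes \<alpha> \<beta> t F P N :: real
  assumes "\<alpha> > 3" "\<beta> \<ge> 0" "t > 0" "2 * \<beta> * (\<alpha> - 2) \<le> (\<alpha> - 3) * t"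
    and "0 \<le> F" "F \<le> P" "0 \<le> N"
  shows "4 * (3 * t\<^sup>2 - 4 * \<beta> * t) * F - 4 * \<alpha> * (t\<^sup>2 - 2 * \<beta> * t) * P
           - \<beta> * t\<^sup>2 * (t\<^sup>2 - 2 * \<beta> * t) * N \<le> - (\<beta> / (\<alpha> - 2)) * (t ^ 4 * N)"
proof -
  define gap where "gap = (\<alpha> - 3) * t - 2 * \<beta> * (\<alpha> - 2)"
  define D where "D = t\<^sup>2 - 2 * \<beta> * t"
  have "gap \<ge> 0" "\<alpha> - 2 > 0"
    using assms(1,4) unfolding gap_def by simp_all
  have "D \<ge> 0"
  proof -
    have "(\<alpha> - 3) * (2 * \<beta>) \<le> 2 * \<beta> * (\<alpha> - 2)"
      using assms(2) by (simp add: algebra_simps)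
    also have "\<dots> \<le> (\<alpha> - 3) * t"
      by (fact assms(4))
    finally have "(\<alpha> - 3) * (2 * \<beta>) \<le> (\<alpha> - 3) * t" .
    then have "2 * \<beta> \<le> t"
      using assms(1) by simp
    then show ?thesis
      unfolding D_def using assms(3) by (simp add: power2_eq_square algebra_simps)
  qed
  have "\<alpha> * D - (3 * t\<^sup>2 - 4 * \<beta> * t) = t * gap"
    unfolding D_def gap_def by (simp add: power2_eq_square algebra_simps)
  moreover have "0 \<le> t * gap"
    using \<open>gap \<ge> 0\<close> assms(3) by simp
  ultimately have "(3 * t\<^sup>2 - 4 * \<beta> * t) * F \<le> \<alpha> * D * F"
    using assms(5) by (intro mult_right_mono) auto
  also have "\<dots> \<le> \<alpha> * D * P"
    using \<open>D \<ge> 0\<close> assms(1,6) by (intro mult_left_mono) auto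
  finally have F_le: "(3 * t\<^sup>2 - 4 * \<beta> * t) * F \<le> \<alpha> * D * P" .
  have "(\<alpha> - 2) * (\<beta> * t\<^sup>2 * D * N) - \<beta> * (t ^ 4 * N) = \<beta> * t ^ 3 * N * gap"
    unfolding D_def gap_def by (simp add: power2_eq_square power3_eq_cube power4_eq_xxxx algebra_simps)
  then have "\<beta> * (t ^ 4 * N) \<le> (\<alpha> - 2) * (\<beta> * t\<^sup>2 * D * N)"
    using \<open>gap \<ge> 0\<close> assms(2,3,7) by (smt (verit) mult_nonneg_nonneg zero_le_power)
  then have N_le: "(\<beta> / (\<alpha> - 2)) * (t ^ 4 * N) \<le> \<beta> * t\<^sup>2 * D * N"
    using \<open>\<alpha> - 2 > 0\<close> by (simp add: divide_le_eq mult.commute)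
  show ?thesis
    using F_le N_le unfolding D_def by (simp add: algebra_simps)
qed

locale toges_vh =
  fixes f :: "'a::real_inner \<Rightarrow> real"
    and gradf :: "'a \<Rightarrow> 'a"
    and hessf :: "'a \<Rightarrow> ('a \<Rightarrow>\<^sub>L 'a)"
    and u u' u'' u''' :: "real \<Rightarrow> 'a"
    and t0 \<alpha> \<beta> :: real
    and z :: 'a
  assumes convex: "convex_on UNIV f"
    and grad: "\<And>x. (f has_derivative (\<lambda>h. gradf x \<bullet> h)) (at x)"
    and hess: "\<And>x. (gradf has_derivative blinfun_apply (hessf x)) (at x)"
    and z_min: "\<And>x. f z \<le> f x"
    and t0_pos: "t0 > 0" and alpha_gt: "\<alpha> > 3" and beta_nonneg: "\<beta> \<ge> 0"
    and du: "\<And>t. t \<ge> t0 \<Longrightarrow> (u has_vector_derivative u' t) (at t within {t0..})"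
    and ddu: "\<And>t. t \<ge> t0 \<Longrightarrow> (u' has_vector_derivative u'' t) (at t within {t0..})"
    and dddu: "\<And>t. t \<ge> t0 \<Longrightarrow> (u'' has_vector_derivative u''' t) (at t within {t0..})"
    and ode: "\<And>t. t \<ge> t0 \<Longrightarrow>
       u''' t + ((\<alpha> + 7) / t) *\<^sub>R u'' t + (5 * (\<alpha> + 1) / t\<^sup>2) *\<^sub>R u' t
       + \<beta> *\<^sub>R blinfun_apply (hessf (u t + (t / 4) *\<^sub>R u' t)) ((5/4) *\<^sub>R u' t + (t / 4) *\<^sub>R u'' t)
       + gradf (u t + (t / 4) *\<^sub>R u' t) = 0"
begin

definition extrap :: "real \<Rightarrow> 'a"
  where "extrap t = u t + (t / 4) *\<^sub>R u' t"

definition extrap' :: "real \<Rightarrow> 'a"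
  where "extrap' t = (5/4) *\<^sub>R u' t + (t / 4) *\<^sub>R u'' t"

definition anchor :: "real \<Rightarrow> 'a"
  where "anchor t = (t\<^sup>2) *\<^sub>R (u'' t + \<beta> *\<^sub>R gradf (extrap t)) + ((\<alpha> + 5) * t) *\<^sub>R u' t
                    + (4 * \<alpha>) *\<^sub>R (u t - z)"

definition energy :: "real \<Rightarrow> real"
  where "energy t = 4 * (t ^ 3 - 2 * \<beta> * t\<^sup>2) * (f (extrap t) - f z) + (1/2) * (norm (anchor t))\<^sup>2"

definition energy_rate :: "real \<Rightarrow> real"
  where "energy_rate t = 4 * (3 * t\<^sup>2 - 4 * \<beta> * t) * (f (extrap t) - f z)
           - 4 * \<alpha> * (t\<^sup>2 - 2 * \<beta> * t) * (gradf (extrap t) \<bullet> (extrap t - z))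
           - \<beta> * t\<^sup>2 * (t\<^sup>2 - 2 * \<beta> * t) * (norm (gradf (extrap t)))\<^sup>2"

definition t1 :: real
  where "t1 = max t0 (2 * \<beta> * (\<alpha> - 2) / (\<alpha> - 3))"

lemma Inf_eq_min: "(INF x. f x) = f z"
  by (rule cInf_eq_minimum) (auto intro: z_min)

lemma t1_leD:
  assumes "t1 \<le> t"
  shows "t0 \<le> t" "0 < t" "2 * \<beta> * (\<alpha> - 2) \<le> (\<alpha> - 3) * t"
proof -
  show "t0 \<le> t" "0 < t"
    using assms t0_pos unfolding t1_def by auto
  have "2 * \<beta> * (\<alpha> - 2) / (\<alpha> - 3) \<le> t"
    using assms unfolding t1_def by simp
  then show "2 * \<beta> * (\<alpha> - 2) \<le> (\<alpha> - 3) * t"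
    using alpha_gt by (simp add: divide_le_eq mult.commute)
qed

lemma extrap_has_derivative:
  assumes "t0 \<le> t"
  shows "(extrap has_vector_derivative extrap' t) (at t within {t0..})"
proof -
  have "(extrap has_vector_derivative u' t + ((t / 4) *\<^sub>R u'' t + (1 / 4) *\<^sub>R u' t)) (at t within {t0..})"
    unfolding extrap_def
    by (intro has_vector_derivative_add has_vector_derivative_scaleR du ddu assms)
       (auto intro!: derivative_eq_intros)
  moreover have "u' t + ((t / 4) *\<^sub>R u'' t + (1 / 4) *\<^sub>R u' t) = extrap' t"
    using scaleR_add_left[of 1 "1/4" "u' t"] unfolding extrap'_def by (simp add: algebra_simps)
  ultimately show ?thesis
    by simp
qed

lemma gradf_extrap_has_derivative:
  assumes "t0 \<le> t"
  shows "((\<lambda>t. gradf (extrap t)) has_vector_derivative hessf (extrap t) (extrap' t)) (at t within {t0..})"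
  by (rule has_vector_derivative_comp_blinfun[OF extrap_has_derivative[OF assms] hess])

lemma anchor_has_derivative:
  assumes "t0 \<le> t"
  shows "(anchor has_vector_derivative (- (t\<^sup>2 - 2 * \<beta> * t)) *\<^sub>R gradf (extrap t)) (at t within {t0..})"
proof -
  let ?H = "hessf (extrap t) (extrap' t)"
  have ode_scaled: "t\<^sup>2 *\<^sub>R u''' t + (2 * t + (\<alpha> + 5) * t) *\<^sub>R u'' t + ((\<alpha> + 5) + 4 * \<alpha>) *\<^sub>R u' t
      + (\<beta> * t\<^sup>2) *\<^sub>R ?H + t\<^sup>2 *\<^sub>R gradf (extrap t) = 0"
  proof -
    have "t\<^sup>2 * ((\<alpha> + 7) / t) = 2 * t + (\<alpha> + 5) * t"
      "t\<^sup>2 * (5 * (\<alpha> + 1) / t\<^sup>2) = (\<alpha> + 5) + 4 * \<alpha>"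
      using assms t0_pos by (simp_all add: power2_eq_square field_simps)
    then show ?thesis
      using arg_cong[OF ode[OF assms], of "scaleR (t\<^sup>2)"]
      by (simp add: scaleR_add_right extrap_def extrap'_def mult.commute)
  qed
  from gradf_extrap_has_derivative[OF assms]
  have "(anchor has_vector_derivative
      (t\<^sup>2 *\<^sub>R (u''' t + \<beta> *\<^sub>R ?H) + (2 * t) *\<^sub>R (u'' t + \<beta> *\<^sub>R gradf (extrap t)))
      + (((\<alpha> + 5) * t) *\<^sub>R u'' t + (\<alpha> + 5) *\<^sub>R u' t) + (4 * \<alpha>) *\<^sub>R (u' t - 0)) (at t within {t0..})"
    unfolding anchor_def
    by (intro has_vector_derivative_add has_vector_derivative_scaleR has_vector_derivative_diff
          has_vector_derivative_const du ddu dddu assms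
          bounded_linear.has_vector_derivative[OF bounded_linear_scaleR_right])
       (auto intro!: derivative_eq_intros)
  moreover have "t\<^sup>2 *\<^sub>R (u''' t + \<beta> *\<^sub>R ?H) + (2 * t) *\<^sub>R (u'' t + \<beta> *\<^sub>R gradf (extrap t))
      + (((\<alpha> + 5) * t) *\<^sub>R u'' t + (\<alpha> + 5) *\<^sub>R u' t) + (4 * \<alpha>) *\<^sub>R (u' t - 0)
      = (- (t\<^sup>2 - 2 * \<beta> * t)) *\<^sub>R gradf (extrap t)"
    using ode_scaled[unfolded scaleR_add_left] by (simp add: algebra_simps)
  ultimately show ?thesis
    by simp
qed

lemma anchor_eq:
  "anchor t = (4 * \<alpha>) *\<^sub>R (extrap t - z) + (4 * t) *\<^sub>R extrap' t + (\<beta> * t\<^sup>2) *\<^sub>R gradf (extrap t)"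
  unfolding anchor_def extrap_def extrap'_def by (simp add: algebra_simps power2_eq_square)

lemma energy_has_derivative:
  assumes "t0 \<le> t"
  shows "(energy has_real_derivative energy_rate t) (at t within {t0..})"
proof -
  let ?g = "gradf (extrap t)"
  have weight: "((\<lambda>t. 4 * (t ^ 3 - 2 * \<beta> * t\<^sup>2)) has_real_derivative 4 * (3 * t\<^sup>2 - 4 * \<beta> * t))
      (at t within {t0..})"
    by (auto intro!: derivative_eq_intros simp: power2_eq_square)
  have "(energy has_real_derivative
      4 * (3 * t\<^sup>2 - 4 * \<beta> * t) * (f (extrap t) - f z) + (?g \<bullet> extrap' t - 0) * (4 * (t ^ 3 - 2 * \<beta> * t\<^sup>2))
      + 1/2 * (2 * (anchor t \<bullet> (- (t\<^sup>2 - 2 * \<beta> * t)) *\<^sub>R ?g))) (at t within {t0..})"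
    unfolding energy_def
    by (intro DERIV_add DERIV_mult[OF weight] DERIV_diff DERIV_const
          has_real_derivative_comp_gradient[OF extrap_has_derivative[OF assms] grad]
          DERIV_cmult[OF has_real_derivative_norm_square[OF anchor_has_derivative[OF assms]]])
  moreover have "anchor t \<bullet> ?g = 4 * \<alpha> * (?g \<bullet> (extrap t - z)) + 4 * t * (?g \<bullet> extrap' t) + \<beta> * t\<^sup>2 * (norm ?g)\<^sup>2"
    unfolding anchor_eq inner_add_left inner_scaleR_left power2_norm_eq_inner
    by (simp add: inner_commute[of "extrap' t"] inner_commute[of "extrap t - z"])
  ultimately show ?thesis
    unfolding energy_rate_def by (simp add: algebra_simps power2_eq_square power3_eq_cube)
qed

lemma energy_rate_le:
  assumes "t1 \<le> t"
  shows "energy_rate t \<le> - (\<beta> / (\<alpha> - 2)) * (t ^ 4 * (norm (gradf (extrap t)))\<^sup>2)"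
  unfolding energy_rate_def
proof (rule energy_rate_bound_real)
  show "f (extrap t) - f z \<le> gradf (extrap t) \<bullet> (extrap t - z)"
    using convex_on_imp_above_tangent_gradient[OF convex grad, of "extrap t" z]
    by (simp add: inner_diff_right)
qed (use alpha_gt beta_nonneg t1_leD[OF assms] z_min in auto)

lemma energy_rate_nonpos:
  assumes "t1 \<le> t"
  shows "energy_rate t \<le> 0"
proof -
  have "0 \<le> (\<beta> / (\<alpha> - 2)) * (t ^ 4 * (norm (gradf (extrap t)))\<^sup>2)"
    using alpha_gt beta_nonneg by simp
  then show ?thesis
    using energy_rate_le[OF assms] by linarith
qed

lemma energy_antimono:
  assumes "t1 \<le> s" "s \<le> t"
  shows "energy t \<le> energy s"
proof -
  have "energy t - energy s \<le> 0"
    by (rule has_real_derivative_diff_le_integral[of s t "{t0..}" energy energy_rate "\<lambda>_. 0"])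
       (use assms t1_leD energy_has_derivative energy_rate_nonpos in auto)
  then show ?thesis
    by simp
qed

lemma cube_le_energy_weight:
  assumes "t1 \<le> t"
  shows "t ^ 3 \<le> (\<alpha> - 2) * (t ^ 3 - 2 * \<beta> * t\<^sup>2)"
proof -
  have "(\<alpha> - 2) * (t ^ 3 - 2 * \<beta> * t\<^sup>2) - t ^ 3 = t\<^sup>2 * ((\<alpha> - 3) * t - 2 * \<beta> * (\<alpha> - 2))"
    by (simp add: algebra_simps power2_eq_square power3_eq_cube)
  also have "\<dots> \<ge> 0"
    using t1_leD[OF assms] by simp
  finally show ?thesis
    by simp
qed

lemma energy_weight_nonneg:
  assumes "t1 \<le> t"
  shows "0 \<le> t ^ 3 - 2 * \<beta> * t\<^sup>2"
  using cube_le_energy_weight[OF assms] t1_leD(2)[OF assms] alpha_gt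
  by (smt (verit) mult_le_0_iff zero_less_power)

lemma energy_nonneg:
  assumes "t1 \<le> t"
  shows "0 \<le> energy t"
  unfolding energy_def using energy_weight_nonneg[OF assms] z_min[of "extrap t"] by simp

lemma extrap_gap_le:
  assumes "t1 \<le> t"
  shows "4 * t ^ 3 * (f (extrap t) - f z) \<le> (\<alpha> - 2) * energy t1"
proof -
  have "4 * t ^ 3 * (f (extrap t) - f z) \<le> 4 * ((\<alpha> - 2) * (t ^ 3 - 2 * \<beta> * t\<^sup>2)) * (f (extrap t) - f z)"
    using cube_le_energy_weight[OF assms] z_min[of "extrap t"] by (intro mult_right_mono) auto
  also have "\<dots> \<le> (\<alpha> - 2) * energy t"
    using alpha_gt unfolding energy_def by (simp add: algebra_simps mult_right_mono)
  also have "\<dots> \<le> (\<alpha> - 2) * energy t1"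
    using alpha_gt energy_antimono[OF order.refl assms] by simp
  finally show ?thesis .
qed

lemma trajectory_slope_le:
  assumes "t1 \<le> t"
  shows "t ^ 4 * (gradf (u t) \<bullet> u' t) \<le> (\<alpha> - 2) * energy t1 - 4 * t ^ 3 * (f (u t) - f z)"
proof -
  have "t ^ 4 * (gradf (u t) \<bullet> u' t) = 4 * t ^ 3 * ((t / 4) * (gradf (u t) \<bullet> u' t))"
    by (simp add: power4_eq_xxxx power3_eq_cube)
  also have "\<dots> \<le> 4 * t ^ 3 * (f (extrap t) - f (u t))"
    using convex_on_imp_above_tangent_gradient[OF convex grad, of "u t" "extrap t"] t1_leD(2)[OF assms]
    unfolding extrap_def by (intro mult_left_mono) auto
  also have "\<dots> = 4 * t ^ 3 * (f (extrap t) - f z) - 4 * t ^ 3 * (f (u t) - f z)"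
    by (simp add: algebra_simps)
  also have "\<dots> \<le> (\<alpha> - 2) * energy t1 - 4 * t ^ 3 * (f (u t) - f z)"
    using extrap_gap_le[OF assms] by simp
  finally show ?thesis .
qed

lemma trajectory_gap_le:
  assumes "t1 \<le> t"
  shows "f (u t) - f z \<le> (t1 ^ 4 * (f (u t1) - f z) - (\<alpha> - 2) * energy t1 * t1) * (1 / t ^ 4)
                          + (\<alpha> - 2) * energy t1 / t ^ 3"
proof -
  define c where "c = (\<alpha> - 2) * energy t1"
  have "(\<lambda>s. s ^ 4 * (f (u s) - f z)) t - (\<lambda>s. s ^ 4 * (f (u s) - f z)) t1 \<le> (t - t1) * c"
  proof (rule has_real_derivative_diff_le_integral[OF assms])
    show "((\<lambda>_. c) has_integral (t - t1) * c) {t1..t}"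
      using has_integral_const_real[of c t1 t] assms by simp
  next
    fix s assume s: "s \<in> {t1..t}"
    then have "t0 \<le> s"
      using t1_leD by auto
    show "((\<lambda>s. s ^ 4 * (f (u s) - f z)) has_real_derivative
        4 * s ^ 3 * (f (u s) - f z) + (gradf (u s) \<bullet> u' s - 0) * s ^ 4) (at s within {t0..})"
      by (intro DERIV_mult DERIV_diff DERIV_const has_real_derivative_comp_gradient[OF du grad]
            \<open>t0 \<le> s\<close>) (auto intro!: derivative_eq_intros)
    show "4 * s ^ 3 * (f (u s) - f z) + (gradf (u s) \<bullet> u' s - 0) * s ^ 4 \<le> c"
      using trajectory_slope_le[of s] s unfolding c_def by (simp add: mult.commute)
  qed (use t1_leD in auto)
  then have "t ^ 4 * (f (u t) - f z) \<le> t1 ^ 4 * (f (u t1) - f z) - c * t1 + c * t"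
    using assms by (simp add: algebra_simps)
  then show ?thesis
    using t1_leD(2)[OF assms] unfolding c_def[symmetric]
    by (simp add: field_simps power_numeral_reduce)
qed

lemma trajectory_value_antimono:
  assumes "t1 \<le> s" "s \<le> t"
  shows "f (u t) + (\<alpha> - 2) * energy t1 / (3 * t ^ 3) \<le> f (u s) + (\<alpha> - 2) * energy t1 / (3 * s ^ 3)"
proof -
  define c where "c = (\<alpha> - 2) * energy t1"
  have "(\<lambda>x. f (u x) + c / (3 * x ^ 3)) t - (\<lambda>x. f (u x) + c / (3 * x ^ 3)) s \<le> 0"
  proof (rule has_real_derivative_diff_le_integral[where k = "\<lambda>_. 0", OF assms(2)])
    fix x assume x: "x \<in> {s..t}"
    then have "t1 \<le> x"
      using assms by auto
    note x_pos = t1_leD[OF this]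
    show "((\<lambda>x. f (u x) + c / (3 * x ^ 3)) has_real_derivative gradf (u x) \<bullet> u' x - c / x ^ 4)
        (at x within {t0..})"
      using x_pos
      by (auto intro!: derivative_eq_intros has_real_derivative_comp_gradient[OF du grad]
          simp: field_simps power_numeral_reduce)
    have "x ^ 4 * (gradf (u x) \<bullet> u' x) \<le> c"
      using trajectory_slope_le[OF \<open>t1 \<le> x\<close>] z_min[of "u x"] x_pos unfolding c_def
      by (smt (verit) mult_nonneg_nonneg zero_le_power)
    then show "gradf (u x) \<bullet> u' x - c / x ^ 4 \<le> 0"
      using x_pos by (simp add: field_simps)
  qed (use assms t1_leD in auto)
  then show ?thesis
    unfolding c_def by simp
qed

lemma gradf_extrap_continuous_on:
  assumes "t0 \<le> a"
  shows "continuous_on {a..b} (\<lambda>t. gradf (extrap t))"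
  unfolding continuous_on_eq_continuous_within
proof
  fix t assume "t \<in> {a..b}"
  then have "t0 \<le> t"
    using assms by auto
  from has_vector_derivative_continuous[OF gradf_extrap_has_derivative[OF this]]
  show "continuous (at t within {a..b}) (\<lambda>t. gradf (extrap t))"
    by (rule continuous_within_subset) (use assms in auto)
qed

lemma weighted_gradient_integral_le:
  assumes "\<beta> > 0"
  shows "(\<lambda>t. t ^ 4 * (norm (gradf (extrap t)))\<^sup>2) integrable_on {t1..}
       \<and> integral {t1..} (\<lambda>t. t ^ 4 * (norm (gradf (extrap t)))\<^sup>2) \<le> (\<alpha> - 2) * energy t1 / \<beta>"
proof (rule nonneg_has_integral_atLeast_le)
  let ?k = "\<lambda>t. t ^ 4 * (norm (gradf (extrap t)))\<^sup>2"
  have t0_le_t1: "t0 \<le> t1"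
    using t1_leD by simp
  show int: "?k integrable_on {t1..b}" for b
    using gradf_extrap_continuous_on[OF t0_le_t1]
    by (intro integrable_continuous_real continuous_intros)
  show "integral {t1..b} ?k \<le> (\<alpha> - 2) * energy t1 / \<beta>" if "t1 \<le> b" for b
  proof -
    have "energy b - energy t1 \<le> - (\<beta> / (\<alpha> - 2)) * integral {t1..b} ?k"
      by (rule has_real_derivative_diff_le_integral[OF that _ energy_has_derivative energy_rate_le
            has_integral_mult_right[OF integrable_integral[OF int]]])
         (use t1_leD in auto)
    then have "\<beta> / (\<alpha> - 2) * integral {t1..b} ?k \<le> energy t1"
      using energy_nonneg[OF that] by linarith
    then show ?thesis
      using alpha_gt assms by (simp add: field_simps)
  qed
qed simp

end

theorem theorem3p1:
  fixes f :: "'a::{real_inner, complete_space} \<Rightarrow> real"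
    and gradf :: "'a \<Rightarrow> 'a"
    and hessf :: "'a \<Rightarrow> ('a \<Rightarrow>\<^sub>L 'a)"
    and u u' u'' u''' :: "real \<Rightarrow> 'a"
    and t0 \<alpha> \<beta> :: real
    and z :: 'a
  assumes convex: "convex_on UNIV f"
    and grad: "\<And>x. (f has_derivative (\<lambda>h. gradf x \<bullet> h)) (at x)"
    and hess: "\<And>x. (gradf has_derivative blinfun_apply (hessf x)) (at x)"
    and hess_cont: "continuous_on UNIV hessf"
    and z_min: "\<And>x. f z \<le> f x"
    and t0_pos: "t0 > 0" and alpha_gt: "\<alpha> > 3" and beta_nonneg: "\<beta> \<ge> 0"
    and du: "\<And>t. t \<ge> t0 \<Longrightarrow> (u has_vector_derivative u' t) (at t within {t0..})"
    and ddu: "\<And>t. t \<ge> t0 \<Longrightarrow> (u' has_vector_derivative u'' t) (at t within {t0..})"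
    and dddu: "\<And>t. t \<ge> t0 \<Longrightarrow> (u'' has_vector_derivative u''' t) (at t within {t0..})"
    and dddu_cont: "continuous_on {t0..} u'''"
    and ode: "\<And>t. t \<ge> t0 \<Longrightarrow>
       u''' t + ((\<alpha> + 7) / t) *\<^sub>R u'' t + (5 * (\<alpha> + 1) / t\<^sup>2) *\<^sub>R u' t
       + \<beta> *\<^sub>R blinfun_apply (hessf (u t + (t / 4) *\<^sub>R u' t)) ((5/4) *\<^sub>R u' t + (t / 4) *\<^sub>R u'' t)
       + gradf (u t + (t / 4) *\<^sub>R u' t) = 0"
  defines "E \<equiv> (\<lambda>t. 4 * (t ^ 3 - 2 * \<beta> * t\<^sup>2) * (f (u t + (t / 4) *\<^sub>R u' t) - (INF x. f x))
       + (1/2) * (norm ((t\<^sup>2) *\<^sub>R (u'' t + \<beta> *\<^sub>R gradf (u t + (t / 4) *\<^sub>R u' t))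
                       + ((\<alpha> + 5) * t) *\<^sub>R u' t + (4 * \<alpha>) *\<^sub>R (u t - z)))\<^sup>2)"
    and "t1 \<equiv> max t0 (2 * \<beta> * (\<alpha> - 2) / (\<alpha> - 3))"
  shows "(\<forall>t\<ge>t1. f (u t + (t / 4) *\<^sub>R u' t) - (INF x. f x) \<le> (\<alpha> - 2) * E t1 / (4 * t ^ 3))
       \<and> (\<forall>t\<ge>t1. f (u t) - (INF x. f x) \<le>
             (t1 ^ 4 * (f (u t1) - (INF x. f x)) - (\<alpha> - 2) * E t1 * t1) * (1 / t ^ 4)
             + (\<alpha> - 2) * E t1 / t ^ 3)
       \<and> (\<forall>s t. t1 \<le> s \<longrightarrow> s \<le> t \<longrightarrow>
             f (u t) + (\<alpha> - 2) * E t1 / (3 * t ^ 3) \<le> f (u s) + (\<alpha> - 2) * E t1 / (3 * s ^ 3))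
       \<and> (\<beta> > 0 \<longrightarrow>
             (\<lambda>t. t ^ 4 * (norm (gradf (u t + (t / 4) *\<^sub>R u' t)))\<^sup>2) integrable_on {t1..}
           \<and> integral {t1..} (\<lambda>t. t ^ 4 * (norm (gradf (u t + (t / 4) *\<^sub>R u' t)))\<^sup>2)
               \<le> (\<alpha> - 2) * E t1 / \<beta>)"
proof -
  interpret flow: toges_vh f gradf hessf u u' u'' u''' t0 \<alpha> \<beta> z
    by unfold_locales (fact assms)+
  have E_eq: "E = flow.energy"
    unfolding E_def flow.energy_def flow.anchor_def flow.extrap_def flow.Inf_eq_min ..
  have t1_eq: "t1 = flow.t1"
    unfolding t1_def flow.t1_def ..
  have "f (flow.extrap t) - f z \<le> (\<alpha> - 2) * flow.energy flow.t1 / (4 * t ^ 3)" if "flow.t1 \<le> t" for t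
    using flow.extrap_gap_le[OF that] flow.t1_leD(2)[OF that] by (simp add: field_simps)
  then show ?thesis
    unfolding E_eq t1_eq flow.Inf_eq_min
    using flow.trajectory_gap_le flow.trajectory_value_antimono flow.weighted_gradient_integral_le
    by (simp add: flow.extrap_def)
qed

end
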